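(* Let $k>0$ be an integer and let $a_0,a_1,\ldots,a_k$ be fixed integers. For each integer $n>k$ let $$P_{2n}(x)=x^n\Big(x^n+a_0+x^{-n}+\sum_{j=1}^k a_j\big(x^j+x^{-j}\big)\Big),$$ a monic reciprocal polynomial of degree $2n$ with integer coefficients. Then the limit $\lim_{n\to\infty} C(P_{2n})$ exists.
   Context: For a polynomial $P$ of degree $d$, let $I(P)$, $U(P)$, $E(P)$ denote the numbers of complex zeros of $P$ (counted with multiplicity) of modulus $<1$, $=1$, $>1$ respectively, so $I(P)+U(P)+E(P)=d$. For the polynomial $P_{2n}$ of degree $2n$, define $C(P_{2n})=\frac{I(P_{2n})+E(P_{2n})}{2n}$, the proportion of zeros that are not on the unit circle. *)

theory Defs
  imports "HOL-Analysis.Analysis" "HOL-Computational_Algebra.Polynomial"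
begin

definition zeros_in :: "complex poly \<Rightarrow> nat" where
  "zeros_in p = size (filter_mset (\<lambda>z. norm z < 1) (proots p))"
definition zeros_on :: "complex poly \<Rightarrow> nat" where
  "zeros_on p = size (filter_mset (\<lambda>z. norm z = 1) (proots p))"
definition zeros_out :: "complex poly \<Rightarrow> nat" where
  "zeros_out p = size (filter_mset (\<lambda>z. norm z > 1) (proots p))"

definition C_prop :: "complex poly \<Rightarrow> nat \<Rightarrow> real" where
  "C_prop p n = real (zeros_in p + zeros_out p) / real (2 * n)"

definition Ppoly :: "nat \<Rightarrow> (nat \<Rightarrow> int) \<Rightarrow> nat \<Rightarrow> complex poly" where
  "Ppoly k a n = monom 1 (2 * n) + monom (of_int (a 0)) n + 1
     + (\<Sum>j = 1..k. monom (of_int (a j)) (n + j) + monom (of_int (a j)) (n - j))"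

end

theory Submission
  imports Defs "HOL-Computational_Algebra.Fundamental_Theorem_Algebra"
begin

text \<open>On the unit circle \<open>P\<^sub>2\<^sub>n(e^(it)) = e^(int) F\<^sub>n(t)\<close> with \<open>F\<^sub>n(t) = 2 cos(nt) + Q(t)\<close>, where
  \<open>Q(t) = a\<^sub>0 + 2 \<Sum> a\<^sub>j cos(jt)\<close> does not depend on \<open>n\<close>; so \<open>U(P\<^sub>2\<^sub>n)\<close> counts the zeros of \<open>F\<^sub>n\<close> in
  \<open>(-\<pi>, \<pi>]\<close> with multiplicity. Cut this interval into \<open>N\<close> cells. A cell on which \<open>|Q| > 2\<close> contains no
  zeros, a cell on which \<open>|Q| < 2\<close> contains \<open>2n/N + O(1)\<close> of them, all simple for large \<open>n\<close>. For large \<open>n\<close>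
  every zero has multiplicity at most two, and double zeros are zeros of \<open>F\<^sub>n'\<close>, of which each cell contains
  \<open>2n/N + O(1)\<close>. Unless \<open>Q \<equiv> \<plusminus>2\<close>, the equation \<open>|Q| = 2\<close> has finitely many solutions, so only \<open>O(1)\<close>
  cells are of neither kind. Hence \<open>U(P\<^sub>2\<^sub>n)/2n\<close> lies within \<open>O(1/N)\<close> of the proportion of cells with
  \<open>|Q| < 2\<close> for all large \<open>n\<close>, and \<open>C(P\<^sub>2\<^sub>n) = 1 - U(P\<^sub>2\<^sub>n)/2n\<close> is a Cauchy sequence.\<close>

section \<open>Zeros of perturbed trigonometric functions\<close>

lemma abs_sin_add_int_pi: "\<bar>sin (y + of_int m * pi)\<bar> = \<bar>sin y\<bar>"
  by (simp add: sin_add mult.commute[of _ pi])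

lemma abs_cos_add_int_pi: "\<bar>cos (y + of_int m * pi)\<bar> = \<bar>cos y\<bar>"
  by (simp add: cos_add mult.commute[of _ pi])

lemma abs_le_pi_div_6_if_abs_sin_le_half:
  assumes "\<bar>y\<bar> \<le> pi/2" "\<bar>sin y\<bar> \<le> 1/2"
  shows "\<bar>y\<bar> \<le> pi/6"
proof (rule ccontr)
  assume "\<not> ?thesis"
  then consider "pi/6 < y" | "y < -(pi/6)" by linarith
  then have "sin (pi/6) < \<bar>sin y\<bar>"
  proof cases
    case 1
    then have "sin (pi/6) < sin y" using assms(1) by (subst sin_mono_less_eq) auto
    then show ?thesis using abs_ge_self[of "sin y"] by linarith
  next
    case 2
    then have "sin y < sin (-(pi/6))" using assms(1) by (subst sin_mono_less_eq) auto
    then show ?thesis using abs_ge_minus_self[of "sin y"] by simp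
  qed
  with assms(2) show False by (simp add: sin_30)
qed

lemma half_le_cos_if_abs_le_pi_div_6:
  assumes "\<bar>y\<bar> \<le> pi/6"
  shows "1/2 \<le> cos y"
proof -
  have "cos (pi/6) \<le> cos \<bar>y\<bar>" using assms by (subst cos_mono_le_eq) auto
  moreover have "cos \<bar>y\<bar> = cos y" by (simp add: abs_if)
  moreover have "1/2 \<le> sqrt 3 / (2::real)" by (simp add: real_le_rsqrt)
  ultimately show ?thesis using cos_30 by linarith
qed

lemma power2_le_if_abs_le: "\<bar>x\<bar> \<le> (y::real) \<Longrightarrow> x^2 \<le> y^2"
  by (metis power2_abs power_mono abs_ge_zero)


lemma sum_squares_2n_cos_sin: "(2 * r * cos x)^2 + (2 * r * sin x)^2 = 4 * (r::real)^2"
proof -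
  have "r^2 * (cos x)^2 + r^2 * (sin x)^2 = r^2" by (metis distrib_left sin_cos_squared_add2 mult_1_right)
  then show ?thesis by (simp add: power_mult_distrib)
qed


definition nearest_pi_multiple :: "real \<Rightarrow> int" where
  "nearest_pi_multiple y = \<lfloor>y/pi + 1/2\<rfloor>"

lemma nearest_pi_multiple_mono: "x \<le> y \<Longrightarrow> nearest_pi_multiple x \<le> nearest_pi_multiple y"
  unfolding nearest_pi_multiple_def using pi_gt_zero by (auto intro!: floor_mono divide_right_mono)

lemma dist_nearest_pi_multiple_le: "\<bar>y - of_int (nearest_pi_multiple y) * pi\<bar> \<le> pi/2"
proof -
  have "of_int (nearest_pi_multiple y) \<le> y/pi + 1/2" "y/pi + 1/2 < of_int (nearest_pi_multiple y) + 1"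
    unfolding nearest_pi_multiple_def by linarith+
  then have "of_int (nearest_pi_multiple y) * pi \<le> y + pi/2" "y - pi/2 < of_int (nearest_pi_multiple y) * pi"
    using pi_gt_zero by (simp_all add: field_simps)
  then show ?thesis by linarith
qed

lemma dist_nearest_pi_multiple_le_pi_div_6:
  assumes "\<bar>sin y\<bar> \<le> 1/2"
  shows "\<bar>y - of_int (nearest_pi_multiple y) * pi\<bar> \<le> pi/6"
  using assms abs_sin_add_int_pi[of "y - of_int (nearest_pi_multiple y) * pi" "nearest_pi_multiple y"]
  by (intro abs_le_pi_div_6_if_abs_sin_le_half dist_nearest_pi_multiple_le) simp

lemma abs_cos_ge_half_near_pi_multiple:
  assumes "\<bar>y - of_int m * pi\<bar> \<le> pi/6"
  shows "1/2 \<le> \<bar>cos y\<bar>"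
  using half_le_cos_if_abs_le_pi_div_6[OF assms] abs_cos_add_int_pi[of "y - of_int m * pi" m] by simp

lemma exists_deriv_zero_between_zeros:
  fixes f :: "real \<Rightarrow> real"
  assumes "\<And>x. (f has_real_derivative f' x) (at x)" "x < y" "f x = 0" "f y = 0"
  obtains z where "x < z" "z < y" "f' z = 0"
proof -
  have "continuous_on {x..y} f"
    using assms(1) by (meson DERIV_continuous continuous_at_imp_continuous_on)
  moreover have "\<And>z. f differentiable (at z)" using assms(1) real_differentiable_def by blast
  ultimately obtain z where "x < z" "z < y" "(f has_real_derivative 0) (at z)"
    using Rolle[of x y f] assms(2-4) by auto
  with DERIV_unique[OF assms(1)] that show ?thesis by blast
qed

lemma card_zeros_le_Suc_card_deriv_zeros:
  fixes f f' :: "real \<Rightarrow> real"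
  assumes der: "\<And>x. (f has_real_derivative f' x) (at x)"
    and fin: "finite {x\<in>{a..b}. f' x = 0}"
    and A: "finite A" "A \<subseteq> {a..b}" "\<And>x. x \<in> A \<Longrightarrow> f x = 0"
  shows "card A \<le> card {x\<in>{a..b}. f' x = 0} + 1"
  using A fin
proof (induction "card A" arbitrary: A b rule: less_induct)
  case less
  show ?case
  proof (cases "card A \<le> 1")
    case False
    define M where "M = Max A"
    define A' where "A' = A - {M}"
    have MA: "M \<in> A" unfolding M_def using False less.prems by (intro Max_in) auto
    have cA': "card A' = card A - 1" and fA': "finite A'"
      unfolding A'_def using MA less.prems by auto
    define M' where "M' = Max A'"
    have M'A': "M' \<in> A'" unfolding M'_def using False cA' fA' by (intro Max_in) auto
    have A'_le: "x \<le> M'" if "x \<in> A'" for x unfolding M'_def using fA' that by simp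
    have "M' < M"
      using M'A' less.prems(1) unfolding A'_def M_def by (simp add: order.not_eq_order_implies_strict)
    then obtain z where z: "M' < z" "z < M" "f' z = 0"
      using exists_deriv_zero_between_zeros[OF der] MA M'A' less.prems(3) unfolding A'_def by blast
    let ?Z = "{x\<in>{a..b}. f' x = 0}"
    have sub: "{x\<in>{a..M'}. f' x = 0} \<subseteq> ?Z - {z}"
      using M'A' MA less.prems(2) z unfolding A'_def by auto
    have z_in: "z \<in> ?Z" using z M'A' MA less.prems(2) unfolding A'_def by auto
    have "card A' \<le> card {x\<in>{a..M'}. f' x = 0} + 1"
      using less.hyps[of A' M'] cA' False fA' A'_le less.prems(2,3,4) finite_subset[OF sub]
      unfolding A'_def by (force simp: subset_iff)
    also have "\<dots> \<le> card (?Z - {z}) + 1"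
      using card_mono[OF _ sub] less.prems(4) by simp
    moreover have "card ?Z > 0" using z_in less.prems(4) by (auto simp: card_gt_0_iff)
    ultimately show ?thesis using z_in less.prems(4) cA' False by (simp add: card_Diff_singleton)
  qed simp
qed

text \<open>Every zero of \<open>S\<close> has \<open>c x\<close> near a multiple of \<open>\<pi>\<close>; since \<open>S'\<close> does not vanish there, Rolle's theorem
  puts distinct zeros near distinct multiples.\<close>
lemma card_zeros_perturbed_sin_le:
  fixes S S' r r' :: "real \<Rightarrow> real" and c :: real
  assumes c: "c > 0"
    and der: "\<And>x. (S has_real_derivative S' x) (at x)"
    and S: "\<And>x. S x = 2*c * sin (c*x) + r x" and S': "\<And>x. S' x = 2*c^2 * cos (c*x) + r' x"
    and r: "\<And>x. \<bar>r x\<bar> \<le> c" and r': "\<And>x. \<bar>r' x\<bar> < c^2"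
    and "\<alpha> \<le> \<beta>"
  shows "finite {x\<in>{\<alpha>..\<beta>}. S x = 0}" "real (card {x\<in>{\<alpha>..\<beta>}. S x = 0}) \<le> c*(\<beta>-\<alpha>)/pi + 2"
proof -
  define Z where "Z = {x\<in>{\<alpha>..\<beta>}. S x = 0}"
  define m where "m x = nearest_pi_multiple (c*x)" for x
  have near: "\<bar>c*x - of_int (m x) * pi\<bar> \<le> pi/6" if "S x = 0" for x
  proof -
    have "\<bar>2*c * sin (c*x)\<bar> \<le> c" using that S[of x] r[of x] by simp
    then show ?thesis
      unfolding m_def using c by (intro dist_nearest_pi_multiple_le_pi_div_6) (simp add: abs_mult)
  qed
  have no_two: False if y: "y1 < y2" "S y1 = 0" "S y2 = 0" "m y1 = m y2" for y1 y2
  proof -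
    obtain z where z: "y1 < z" "z < y2" "S' z = 0"
      using exists_deriv_zero_between_zeros[OF der y(1-3)] .
    have "c*y1 \<le> c*z" "c*z \<le> c*y2" using z c by auto
    then have "\<bar>c*z - of_int (m y1) * pi\<bar> \<le> pi/6" using near[OF y(2)] near[OF y(3), folded y(4)] by linarith
    then have "1/2 \<le> \<bar>cos (c*z)\<bar>" by (rule abs_cos_ge_half_near_pi_multiple)
    then have "c^2 * 1 \<le> c^2 * (2 * \<bar>cos (c*z)\<bar>)" by (intro mult_left_mono) simp_all
    then have "c^2 \<le> \<bar>2*c^2 * cos (c*z)\<bar>" by (simp add: abs_mult)
    then show False using z(3) S'[of z] r'[of z] by linarith
  qed
  have inj: "inj_on m Z"
    by (rule linorder_inj_onI) (use no_two in \<open>auto simp: Z_def\<close>)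
  have img: "m ` Z \<subseteq> {m \<alpha> .. m \<beta>}"
    unfolding m_def Z_def using c by (auto intro!: nearest_pi_multiple_mono)
  show "finite Z" unfolding Z_def[symmetric]
    using inj finite_subset[OF img] finite_atLeastAtMost_int finite_imageD by blast
  have "card Z \<le> card {m \<alpha> .. m \<beta>}"
    using card_inj_on_le[OF inj img] by simp
  moreover have "of_int (m \<beta>) \<le> c*\<beta>/pi + 1/2" "c*\<alpha>/pi + 1/2 < of_int (m \<alpha>) + 1"
    unfolding m_def nearest_pi_multiple_def by linarith+
  moreover have "0 \<le> c*(\<beta>-\<alpha>)/pi" using c \<open>\<alpha> \<le> \<beta>\<close> by simp
  ultimately show "real (card Z) \<le> c*(\<beta>-\<alpha>)/pi + 2"
    by (simp add: diff_divide_distrib right_diff_distrib)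
qed

lemma exists_zero_if_sign_change:
  fixes F :: "real \<Rightarrow> real"
  assumes "continuous_on {x..y} F" "x \<le> y" "F x * F y < 0"
  shows "\<exists>z\<in>{x<..<y}. F z = 0"
proof -
  obtain z where "x \<le> z" "z \<le> y" "F z = 0"
    using assms IVT'[of F x 0 y] IVT2'[of F y 0 x] by (cases "F x < 0") (auto simp: mult_less_0_iff)
  moreover have "z \<noteq> x" "z \<noteq> y" using assms(3) \<open>F z = 0\<close> by auto
  ultimately show ?thesis by auto
qed

text \<open>At the points \<open>m\<pi>/c\<close> the function \<open>F\<close> has the sign of \<open>(-1)^m\<close>.\<close>
lemma perturbed_cos_has_zero_between_pi_multiples:
  fixes F q :: "real \<Rightarrow> real" and c :: real
  assumes c: "c > 0"
    and F: "\<And>x. F x = 2*cos(c*x) + q x"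
    and cont: "continuous_on {of_int m*pi/c..of_int (m+1)*pi/c} q"
    and q: "\<And>x. x \<in> {of_int m*pi/c..of_int (m+1)*pi/c} \<Longrightarrow> \<bar>q x\<bar> < 2"
  shows "\<exists>x\<in>{of_int m*pi/c<..<of_int (m+1)*pi/c}. F x = 0"
proof -
  let ?x = "of_int m*pi/c" and ?y = "of_int (m+1)*pi/c"
  have "?x \<le> ?y" using c by (simp add: divide_right_mono)
  have "c * ?x = pi * of_int m" "c * ?y = pi * of_int (m+1)" using c by simp_all
  moreover have "\<bar>q ?x\<bar> < 2" "\<bar>q ?y\<bar> < 2" using q \<open>?x \<le> ?y\<close> by auto
  ultimately have "F ?x * F ?y < 0"
    using F[of ?x] F[of ?y] cos_npi_int[of "m+1"] by (auto simp: mult_less_0_iff abs_less_iff)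
  moreover have "continuous_on {?x..?y} F"
    unfolding F[abs_def] using cont by (intro continuous_intros)
  ultimately show ?thesis using exists_zero_if_sign_change \<open>?x \<le> ?y\<close> by blast
qed

lemma card_zeros_perturbed_cos_ge:
  fixes F q :: "real \<Rightarrow> real" and c :: real
  assumes c: "c > 0"
    and F: "\<And>x. F x = 2*cos(c*x) + q x"
    and cont: "continuous_on {\<alpha>..\<beta>} q"
    and q: "\<And>x. x \<in> {\<alpha>..\<beta>} \<Longrightarrow> \<bar>q x\<bar> < 2"
  obtains Y where "Y \<subseteq> {x\<in>{\<alpha><..<\<beta>}. F x = 0}" "finite Y" "c*(\<beta>-\<alpha>)/pi - 2 \<le> real (card Y)"
proof -
  define ms where "ms = {\<lceil>c*\<alpha>/pi\<rceil> ..< \<lfloor>c*\<beta>/pi\<rfloor>}"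
  define p where "p m = of_int m * pi / c" for m :: int
  have p_mono: "p m1 < p m2" if "m1 < m2" for m1 m2
    unfolding p_def using that c by (simp add: divide_strict_right_mono)
  have p_range: "{p m..p (m+1)} \<subseteq> {\<alpha>..\<beta>}" if "m \<in> ms" for m
  proof -
    have "c*\<alpha>/pi \<le> of_int m" "m + 1 \<le> \<lfloor>c*\<beta>/pi\<rfloor>"
      using that unfolding ms_def by (auto simp: ceiling_le_iff)
    then have "c*\<alpha>/pi \<le> of_int m" "of_int (m+1) \<le> c*\<beta>/pi"
      by (simp_all only: le_floor_iff)
    then show ?thesis unfolding p_def using c by (auto simp: field_simps)
  qed
  have "\<forall>m\<in>ms. \<exists>x\<in>{p m<..<p (m+1)}. F x = 0"
    using perturbed_cos_has_zero_between_pi_multiples[OF c F] continuous_on_subset[OF cont] q p_range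
    unfolding p_def by blast
  then obtain z where z: "\<And>m. m \<in> ms \<Longrightarrow> p m < z m \<and> z m < p (m+1) \<and> F (z m) = 0"
    by (metis greaterThanLessThan_iff)
  have "strict_mono_on ms z"
  proof (rule strict_mono_onI)
    fix m1 m2 assume "m1 \<in> ms" "m2 \<in> ms" "m1 < m2"
    then show "z m1 < z m2"
      using z[of m1] z[of m2] p_mono[of "m1+1" m2] by (cases "m1 + 1 = m2") force+
  qed
  then have "card (z ` ms) = card ms" by (intro card_image strict_mono_on_imp_inj_on)
  moreover have "c*(\<beta>-\<alpha>)/pi - 2 \<le> real (card ms)"
  proof -
    have "c*\<beta>/pi - 1 - (c*\<alpha>/pi + 1) \<le> of_int (\<lfloor>c*\<beta>/pi\<rfloor> - \<lceil>c*\<alpha>/pi\<rceil>)"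
      using floor_correct[of "c*\<beta>/pi"] ceiling_correct[of "c*\<alpha>/pi"] by linarith
    also have "\<dots> \<le> real (card ms)" unfolding ms_def by simp
    finally show ?thesis by (simp add: diff_divide_distrib right_diff_distrib)
  qed
  moreover have "z ` ms \<subseteq> {x\<in>{\<alpha><..<\<beta>}. F x = 0}"
    using z p_range p_mono by fastforce
  ultimately show ?thesis using that[of "z ` ms"] unfolding ms_def by simp
qed

lemma zeros_in_on_out_sum: "zeros_in p + zeros_on p + zeros_out p = degree p"
proof -
  have "filter_mset (\<lambda>z. \<not> norm z < 1) (proots p)
      = filter_mset (\<lambda>z. norm z = 1) (proots p) + filter_mset (\<lambda>z. norm z > 1) (proots p)"
    by (subst multiset_partition[of _ "\<lambda>z. norm z = 1"])
      (auto simp: filter_filter_mset intro!: arg_cong2[where f="(+)"] filter_mset_cong)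
  then show ?thesis
    using multiset_partition[of "proots p" "\<lambda>z. norm z < 1"] size_proots_complex[of p]
    unfolding zeros_in_def zeros_on_def zeros_out_def by (metis add.assoc size_union)
qed

lemma poly_funpow_pderiv_eq_0_if_less_order:
  fixes p :: "'a::{idom,semiring_char_0} poly"
  assumes "m < order x p"
  shows "poly ((pderiv ^^ m) p) x = 0"
  using assms
proof (induction m arbitrary: p)
  case 0
  then show ?case by (simp add: order_root)
next
  case (Suc m)
  show ?case
  proof (cases "p = 0")
    case False
    then have "order x p = Suc (order x (pderiv p))"
      using Suc.prems by (intro order_pderiv) (auto simp: order_root)
    then show ?thesis using Suc by (simp add: funpow_Suc_right del: funpow.simps)
  next
    case True
    have "(pderiv ^^ n) 0 = 0" for n :: nat by (induction n) auto
    then show ?thesis using True by simp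
  qed
qed

lemma size_filter_mset_proots:
  assumes "p \<noteq> 0"
  shows "size (filter_mset P (proots p)) = (\<Sum>z\<in>{z. poly p z = 0 \<and> P z}. order z p)"
proof -
  have "set_mset (filter_mset P (proots p)) = {z. poly p z = 0 \<and> P z}" using assms by auto
  then show ?thesis
    using assms by (simp add: size_multiset_overloaded_eq)
qed

definition euler_op :: "'a::{comm_semiring_1,semiring_no_zero_divisors} poly \<Rightarrow> 'a poly" where
  "euler_op p = pCons 0 (pderiv p)"

lemma euler_op_add: "euler_op (p + q) = euler_op p + euler_op q"
  unfolding euler_op_def by (simp add: pderiv_add)

lemma euler_op_sum: "euler_op (sum f A) = (\<Sum>x\<in>A. euler_op (f x))"
  by (induction A rule: infinite_finite_induct) (simp_all add: euler_op_add, simp_all add: euler_op_def)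

lemma euler_op_monom: "euler_op (monom c m) = monom (of_nat m * c) m"
proof (cases m)
  case (Suc m')
  then have "euler_op (monom c m) = pCons 0 (monom (of_nat m * c) m')"
    by (simp add: euler_op_def pderiv_monom)
  then show ?thesis by (simp add: monom_Suc Suc)
qed (simp add: euler_op_def pderiv_monom)

lemma poly_euler_op: "poly (euler_op p) x = x * poly (pderiv p) x"
  by (simp add: euler_op_def)

lemma poly_euler_op_euler_op:
  "poly (euler_op (euler_op p)) x = x * (poly (pderiv p) x + x * poly (pderiv (pderiv p)) x)"
  by (simp add: euler_op_def pderiv_pCons)

lemma cis_power_eq: "cis t ^ e = cis t ^ n * cis ((real e - real n) * t)"
  unfolding Complex.DeMoivre cis_mult by (simp add: algebra_simps)

lemma cis_add_cis_minus: "cis x + cis (-x) = complex_of_real (2 * cos x)"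
  by (simp add: complex_eq_iff)

lemma inj_on_cis: "inj_on cis {-pi<..pi}"
proof (rule inj_onI)
  fix x y assume "x \<in> {-pi<..pi}" "y \<in> {-pi<..pi}" "cis x = cis y"
  then have "Arg (cis x) = x" "Arg (cis x) = y" by (auto intro: cis_Arg_unique)
  then show "x = y" by simp
qed

lemma unit_circle_eq_cis_image: "{z. norm z = 1} = cis ` {-pi<..pi}"
proof -
  have "z \<in> cis ` {-pi<..pi}" if "norm z = 1" for z
    using that cis_Arg[of z] Arg_bounded[of z] by (intro image_eqI[of _ _ "Arg z"]) (force simp: sgn_div_norm)+
  then show ?thesis by auto
qed

section \<open>Cells of the circle\<close>

definition cell_lo :: "nat \<Rightarrow> nat \<Rightarrow> real" where
  "cell_lo N i = -pi + 2*pi*real i / real N"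

abbreviation cell_hi :: "nat \<Rightarrow> nat \<Rightarrow> real" where
  "cell_hi N i \<equiv> cell_lo N (Suc i)"

lemma cell_width: "cell_hi N i - cell_lo N i = 2*pi/real N"
  unfolding cell_lo_def by (simp add: diff_divide_distrib[symmetric] algebra_simps)

lemma cell_lo_mono: "i \<le> j \<Longrightarrow> cell_lo N i \<le> cell_lo N j"
  unfolding cell_lo_def by (simp add: divide_right_mono)

lemma cell_lo_less_hi: "N > 0 \<Longrightarrow> cell_lo N i < cell_hi N i"
proof -
  assume "N > 0"
  then have "0 < 2*pi/real N" by simp
  then show ?thesis using cell_width[of N i] by linarith
qed

lemma cell_subset: "i < N \<Longrightarrow> {cell_lo N i..cell_hi N i} \<subseteq> {-pi..pi}"
  using cell_lo_mono[of 0 i N] cell_lo_mono[of "Suc i" N N] by (auto simp: cell_lo_def)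

lemma cell_floor_index:
  assumes "N > 0" "t \<in> {cell_lo N i..cell_hi N i}"
  shows "\<lfloor>(t + pi) * real N / (2*pi)\<rfloor> \<in> {int i, int i + 1}"
proof -
  have "real i \<le> (t + pi) * real N / (2*pi)" "(t + pi) * real N / (2*pi) \<le> real i + 1"
    using assms by (auto simp: cell_lo_def field_simps)
  then show ?thesis by (cases "(t + pi) * real N / (2*pi) < real i + 1") (auto simp: floor_eq_iff)
qed

lemma cell_index_exists:
  assumes "N > 0" "t \<in> {-pi<..pi}"
  obtains i where "i < N" "t \<in> {cell_lo N i<..cell_hi N i}"
proof -
  define i where "i = nat (\<lceil>(t + pi) * real N / (2*pi)\<rceil> - 1)"
  have "0 < (t + pi) * real N" using assms by simp
  then have "0 < (t + pi) * real N / (2*pi)" "(t + pi) * real N / (2*pi) \<le> real N"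
    using assms by (auto simp: field_simps)
  then have "real i < (t + pi) * real N / (2*pi)" "(t + pi) * real N / (2*pi) \<le> real i + 1" "i < N"
    unfolding i_def by linarith+
  then show ?thesis using assms(1) by (intro that) (auto simp: cell_lo_def field_simps)
qed

lemma card_eq_sum_card_cells:
  assumes "N > 0" "finite A" "A \<subseteq> {-pi<..pi}"
  shows "card A = (\<Sum>i<N. card (A \<inter> {cell_lo N i<..cell_hi N i}))"
proof -
  have "A = (\<Union>i<N. A \<inter> {cell_lo N i<..cell_hi N i})"
    using assms cell_index_exists[OF assms(1)] by blast
  moreover have same_cell: "i = j"
    if "t \<in> {cell_lo N i<..cell_hi N i}" "t \<in> {cell_lo N j<..cell_hi N j}" for t i j
    using that cell_lo_mono[of "Suc i" j N] cell_lo_mono[of "Suc j" i N]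
    by (cases i j rule: linorder_cases) auto
  have "card (\<Union>i<N. A \<inter> {cell_lo N i<..cell_hi N i}) = (\<Sum>i<N. card (A \<inter> {cell_lo N i<..cell_hi N i}))"
    by (rule card_UN_disjoint) (use assms(2) same_cell in blast)+
  ultimately show ?thesis by simp
qed

text \<open>Each point lies in at most two of the closed cells.\<close>
lemma card_cells_meeting_le:
  assumes "N > 0" "finite Z"
  shows "card {i\<in>{..<N}. \<exists>t\<in>Z. t \<in> {cell_lo N i..cell_hi N i}} \<le> 2 * card Z"
proof -
  define idx where "idx t = nat \<lfloor>(t + pi) * real N / (2*pi)\<rfloor>" for t
  have "{i\<in>{..<N}. \<exists>t\<in>Z. t \<in> {cell_lo N i..cell_hi N i}} \<subseteq> (\<Union>t\<in>Z. {idx t, idx t - 1})"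
    using cell_floor_index[OF assms(1)] unfolding idx_def by fastforce
  then have "card {i\<in>{..<N}. \<exists>t\<in>Z. t \<in> {cell_lo N i..cell_hi N i}} \<le> card (\<Union>t\<in>Z. {idx t, idx t - 1})"
    using assms(2) by (intro card_mono) auto
  also have "\<dots> \<le> (\<Sum>t\<in>Z. card {idx t, idx t - 1})" by (rule card_UN_le[OF assms(2)])
  also have "\<dots> \<le> (\<Sum>t\<in>Z. 2)" by (rule sum_mono) (simp add: card_insert_le_m1)
  finally show ?thesis by simp
qed

lemma eventually_gt_real_sequentially: "eventually (\<lambda>n. X < real n) sequentially"
proof -
  obtain N :: nat where "X < real N" using reals_Archimedean2 by blast
  then show ?thesis by (intro eventually_sequentiallyI[of N]) auto
qed

lemma convergent_if_eventually_near:
  fixes u :: "nat \<Rightarrow> real"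
  assumes "\<And>e. e > 0 \<Longrightarrow> \<exists>c. eventually (\<lambda>n. \<bar>u n - c\<bar> \<le> e) sequentially"
  shows "convergent u"
proof -
  have "Cauchy u"
  proof (rule metric_CauchyI)
    fix e :: real assume "e > 0"
    then obtain c where "eventually (\<lambda>n. \<bar>u n - c\<bar> \<le> e/3) sequentially" using assms[of "e/3"] by auto
    then obtain M where M: "\<And>n. n \<ge> M \<Longrightarrow> \<bar>u n - c\<bar> \<le> e/3" by (auto simp: eventually_sequentially)
    have "dist (u m) (u n) < e" if "m \<ge> M" "n \<ge> M" for m n
      using M[OF that(1), unfolded abs_le_iff] M[OF that(2), unfolded abs_le_iff] \<open>e > 0\<close>
      unfolding dist_real_def abs_less_iff by (intro conjI) linarith+
    then show "\<exists>M. \<forall>m\<ge>M. \<forall>n\<ge>M. dist (u m) (u n) < e" by blast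
  qed
  then show ?thesis by (simp add: Cauchy_convergent_iff)
qed

section \<open>The polynomials on the unit circle\<close>

locale reciprocal_family =
  fixes k :: nat and a :: "nat \<Rightarrow> int"
begin

definition Q :: "real \<Rightarrow> real" where
  "Q t = of_int (a 0) + (\<Sum>j=1..k. 2 * of_int (a j) * cos (real j * t))"

definition Q1 :: "real \<Rightarrow> real" where
  "Q1 t = (\<Sum>j=1..k. 2 * real j * of_int (a j) * sin (real j * t))"

definition Q2 :: "real \<Rightarrow> real" where
  "Q2 t = (\<Sum>j=1..k. 2 * (real j)^2 * of_int (a j) * cos (real j * t))"

definition F :: "nat \<Rightarrow> real \<Rightarrow> real" where
  "F n t = 2 * cos (real n * t) + Q t"

definition F1 :: "nat \<Rightarrow> real \<Rightarrow> real" where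
  "F1 n t = 2 * real n * sin (real n * t) + Q1 t"

definition F2 :: "nat \<Rightarrow> real \<Rightarrow> real" where
  "F2 n t = 2 * (real n)^2 * cos (real n * t) + Q2 t"

lemma Q_deriv: "(Q has_real_derivative - Q1 t) (at t)"
  unfolding Q_def[abs_def] Q1_def
  by (auto intro!: derivative_eq_intros simp: sum_negf[symmetric] intro!: sum.cong)

lemma Q1_deriv: "(Q1 has_real_derivative Q2 t) (at t)"
  unfolding Q1_def[abs_def] Q2_def
  by (auto intro!: derivative_eq_intros simp: power2_eq_square intro!: sum.cong)

lemma F_deriv: "(F n has_real_derivative - F1 n t) (at t)"
  unfolding F_def[abs_def] F1_def
  by (auto intro!: derivative_eq_intros Q_deriv)

lemma F1_deriv: "(F1 n has_real_derivative F2 n t) (at t)"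
  unfolding F1_def[abs_def] F2_def
  by (auto intro!: derivative_eq_intros Q1_deriv simp: power2_eq_square)

lemma continuous_on_Q: "continuous_on S Q"
  using Q_deriv by (meson DERIV_continuous continuous_at_imp_continuous_on)

definition B1 :: real where "B1 = (\<Sum>j=1..k. 2 * real j * \<bar>of_int (a j)\<bar>)"

definition B2 :: real where "B2 = (\<Sum>j=1..k. 2 * (real j)^2 * \<bar>of_int (a j)\<bar>)"

lemma abs_Q1_le: "\<bar>Q1 t\<bar> \<le> B1"
  unfolding Q1_def B1_def
  by (rule order_trans[OF sum_abs], rule sum_mono) (simp add: abs_mult mult_left_le)

lemma abs_Q2_le: "\<bar>Q2 t\<bar> \<le> B2"
  unfolding Q2_def B2_def
  by (rule order_trans[OF sum_abs], rule sum_mono) (simp add: abs_mult mult_left_le)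

text \<open>The weight \<open>w d\<close> multiplies the coefficient of \<open>x^(n+d)\<close>; the Euler operator \<open>x d/dx\<close> acts on
  weights as multiplication by \<open>n + d\<close>.\<close>
definition Ppoly_weighted :: "nat \<Rightarrow> (int \<Rightarrow> complex) \<Rightarrow> complex poly" where
  "Ppoly_weighted n w = monom (w n) (2*n) + monom (of_int (a 0) * w 0) n + monom (w (- n)) 0
     + (\<Sum>j=1..k. monom (of_int (a j) * w j) (n+j) + monom (of_int (a j) * w (- j)) (n-j))"

lemma Ppoly_eq_weighted: "Ppoly k a n = Ppoly_weighted n (\<lambda>_. 1)"
  unfolding Ppoly_def Ppoly_weighted_def by (simp add: monom_0 one_pCons)

lemma euler_op_Ppoly_weighted:
  assumes "k \<le> n"
  shows "euler_op (Ppoly_weighted n w) = Ppoly_weighted n (\<lambda>d. (of_nat n + of_int d) * w d)"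
proof -
  have terms: "euler_op (monom (of_int (a j) * w j) (n+j)) + euler_op (monom (of_int (a j) * w (- j)) (n-j))
    = monom (of_int (a j) * ((of_nat n + of_int j) * w j)) (n+j)
      + monom (of_int (a j) * ((of_nat n + of_int (- j)) * w (- j))) (n-j)" if "j \<in> {1..k}" for j
    using that assms by (simp add: euler_op_monom of_nat_diff algebra_simps)
  show ?thesis
    unfolding Ppoly_weighted_def euler_op_add euler_op_sum
    by (simp only: sum.cong[OF refl terms]) (simp add: euler_op_monom algebra_simps)
qed

definition circle_sum :: "nat \<Rightarrow> (int \<Rightarrow> complex) \<Rightarrow> real \<Rightarrow> complex" where
  "circle_sum n w t = w n * cis (real n * t) + of_int (a 0) * w 0 + w (- n) * cis (- (real n * t))
     + (\<Sum>j=1..k. of_int (a j) * (w j * cis (real j * t) + w (- j) * cis (- (real j * t))))"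

lemma poly_Ppoly_weighted_cis:
  assumes "k \<le> n"
  shows "poly (Ppoly_weighted n w) (cis t) = cis t ^ n * circle_sum n w t"
proof -
  have monom_cis: "poly (monom c e) (cis t) = cis t ^ n * (c * cis ((real e - real n) * t))" for c e
    by (simp add: poly_monom cis_power_eq[of t e n])
  have terms: "poly (monom (of_int (a j) * w j) (n+j)) (cis t) + poly (monom (of_int (a j) * w (- j)) (n-j)) (cis t)
     = cis t ^ n * (of_int (a j) * (w j * cis (real j * t) + w (- j) * cis (- (real j * t))))"
    if "j \<in> {1..k}" for j
    using that assms by (simp add: monom_cis of_nat_diff algebra_simps)
  show ?thesis
    unfolding Ppoly_weighted_def circle_sum_def poly_add poly_sum
    by (simp only: sum.cong[OF refl terms]) (simp add: monom_cis sum_distrib_left algebra_simps)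
qed

lemma circle_sum_const: "circle_sum n (\<lambda>_. 1) t = of_real (F n t)"
  unfolding circle_sum_def F_def Q_def
  by (simp add: complex_eq_iff sum_distrib_left algebra_simps)

lemma circle_sum_linear: "circle_sum n (\<lambda>d. of_nat n + of_int d) t = of_nat n * of_real (F n t) + \<i> * of_real (F1 n t)"
  unfolding circle_sum_def F_def Q_def F1_def Q1_def
  by (simp add: complex_eq_iff sum_distrib_left algebra_simps sum.distrib)

lemma circle_sum_square:
  "circle_sum n (\<lambda>d. (of_nat n + of_int d) * (of_nat n + of_int d)) t
    = (of_nat n)^2 * of_real (F n t) + 2 * of_nat n * \<i> * of_real (F1 n t) + of_real (F2 n t)"
  unfolding circle_sum_def F_def Q_def F1_def Q1_def F2_def Q2_def
  by (simp add: complex_eq_iff sum_distrib_left algebra_simps power2_eq_square sum.distrib)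

lemma poly_Ppoly_cis:
  assumes "k \<le> n"
  shows "poly (Ppoly k a n) (cis t) = cis t ^ n * of_real (F n t)"
  by (simp add: Ppoly_eq_weighted poly_Ppoly_weighted_cis[OF assms] circle_sum_const)

lemma poly_euler_op_Ppoly_cis:
  assumes "k \<le> n"
  shows "poly (euler_op (Ppoly k a n)) (cis t) = cis t ^ n * (of_nat n * of_real (F n t) + \<i> * of_real (F1 n t))"
  using circle_sum_linear[of n t]
  by (simp add: Ppoly_eq_weighted euler_op_Ppoly_weighted[OF assms] poly_Ppoly_weighted_cis[OF assms])

lemma poly_euler_op_euler_op_Ppoly_cis:
  assumes "k \<le> n"
  shows "poly (euler_op (euler_op (Ppoly k a n))) (cis t)
    = cis t ^ n * ((of_nat n)^2 * of_real (F n t) + 2 * of_nat n * \<i> * of_real (F1 n t) + of_real (F2 n t))"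
  using circle_sum_square[of n t]
  by (simp add: Ppoly_eq_weighted euler_op_Ppoly_weighted[OF assms] poly_Ppoly_weighted_cis[OF assms] mult.assoc)

lemma degree_Ppoly:
  assumes "k < n"
  shows "degree (Ppoly k a n) = 2*n"
proof -
  define R where "R = monom (of_int (a 0)) n + 1
     + (\<Sum>j = 1..k. monom (of_int (a j) :: complex) (n + j) + monom (of_int (a j)) (n - j))"
  have "Ppoly k a n = monom 1 (2*n) + R" unfolding Ppoly_def R_def by (simp add: algebra_simps)
  moreover have "degree R \<le> n + k" unfolding R_def
    by (intro degree_add_le degree_sum_le order_trans[OF degree_monom_le]) auto
  ultimately show ?thesis using assms by (simp add: degree_add_eq_left degree_monom_eq)
qed

lemma Ppoly_nonzero: "k < n \<Longrightarrow> Ppoly k a n \<noteq> 0"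
  using degree_Ppoly[of n] by auto

lemma not_F1_zero_and_F2_zero:
  assumes "B1^2 + B2^2 < 4 * (real n)^2"
  shows "\<not> (F1 n t = 0 \<and> F2 n t = 0)"
proof
  assume "F1 n t = 0 \<and> F2 n t = 0"
  then have "\<bar>2 * real n * sin (real n * t)\<bar> \<le> B1" "\<bar>2 * (real n)^2 * cos (real n * t)\<bar> \<le> B2"
    using abs_Q1_le[of t] abs_Q2_le[of t] unfolding F1_def F2_def by auto
  then have "(2 * real n * sin (real n * t))^2 \<le> B1^2" "(2 * (real n)^2 * cos (real n * t))^2 \<le> B2^2"
    by (auto intro: power2_le_if_abs_le)
  moreover have "n \<noteq> 0"
    using assms zero_le_power2[of B1] zero_le_power2[of B2] by (cases n) auto
  then have "\<bar>2 * real n * cos (real n * t)\<bar> \<le> \<bar>2 * (real n)^2 * cos (real n * t)\<bar>"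
    by (simp add: abs_mult power2_eq_square mult_right_mono)
  then have "(2 * real n * cos (real n * t))^2 \<le> (2 * (real n)^2 * cos (real n * t))^2"
    by (simp only: abs_le_square_iff)
  ultimately show False using assms sum_squares_2n_cos_sin[of n "n * t"] by linarith
qed

lemma order_Ppoly_cis_le:
  assumes "k < n" "B1^2 + B2^2 < 4 * (real n)^2"
  shows "order (cis t) (Ppoly k a n) \<le> (if F1 n t = 0 then 2 else 1)"
proof -
  let ?P = "Ppoly k a n" and ?x = "cis t"
  have root: "poly ((pderiv ^^ m) ?P) ?x = 0" if "m < order ?x ?P" for m
    using poly_funpow_pderiv_eq_0_if_less_order[OF that] .
  have F: "F n t = 0" if "0 < order ?x ?P"
    using root[OF that] poly_Ppoly_cis[of n t] assms(1) by simp
  have F1: "F1 n t = 0" if "1 < order ?x ?P"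
    using root[OF that] F poly_euler_op_Ppoly_cis[of n t] poly_euler_op[of ?P ?x] assms(1) that
    by simp
  have F2: "F2 n t = 0" if "2 < order ?x ?P"
    using root[OF that] root[of 1] F F1 poly_euler_op_euler_op_Ppoly_cis[of n t]
      poly_euler_op_euler_op[of ?P ?x] assms(1) that
    by (simp add: numeral_2_eq_2)
  show ?thesis
    using F1 F2 not_F1_zero_and_F2_zero[OF assms(2), of t] by (cases "F1 n t = 0") force+
qed

lemma eventually_no_common_zero_F_F1:
  assumes "lo \<le> hi" and Q_lt_2: "\<And>t. t \<in> {lo..hi} \<Longrightarrow> \<bar>Q t\<bar> < 2"
  shows "eventually (\<lambda>n. \<forall>t\<in>{lo..hi}. \<not> (F n t = 0 \<and> F1 n t = 0)) sequentially"
proof -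
  have "continuous_on {lo..hi} (\<lambda>t. \<bar>Q t\<bar>)" by (intro continuous_intros continuous_on_Q)
  then obtain tm where tm: "tm \<in> {lo..hi}" "\<And>t. t \<in> {lo..hi} \<Longrightarrow> \<bar>Q t\<bar> \<le> \<bar>Q tm\<bar>"
    using continuous_attains_sup[of "{lo..hi}" "\<lambda>t. \<bar>Q t\<bar>"] assms(1) by auto
  define M where "M = \<bar>Q tm\<bar>"
  have M: "0 \<le> M" "M < 2" unfolding M_def using Q_lt_2 tm(1) by auto
  then have "M^2 < 2^2" by (intro power_strict_mono) auto
  then have "0 < 4 - M^2" by simp
  show ?thesis
    using eventually_gt_real_sequentially[of "B1^2 / (4 - M^2)"]
  proof (rule eventually_mono, intro ballI notI)
    fix n t assume n: "B1^2 / (4 - M^2) < real n" and t: "t \<in> {lo..hi}" and "F n t = 0 \<and> F1 n t = 0"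
    then have c: "2 * cos (real n * t) = - Q t" and s: "2 * real n * sin (real n * t) = - Q1 t"
      unfolding F_def F1_def by linarith+
    have "4 * (real n)^2 = (real n * (2 * cos (real n * t)))^2 + (2 * real n * sin (real n * t))^2"
      using sum_squares_2n_cos_sin[of n "n * t"] by (simp add: algebra_simps)
    also have "\<dots> = (real n)^2 * (Q t)^2 + (Q1 t)^2"
      unfolding c s by (simp add: power_mult_distrib)
    also have "\<dots> \<le> (real n)^2 * M^2 + B1^2"
      using tm(2)[OF t] abs_Q1_le[of t] unfolding M_def
      by (intro add_mono mult_left_mono power2_le_if_abs_le) auto
    finally have "(real n)^2 * (4 - M^2) \<le> B1^2" by (simp add: algebra_simps)
    moreover have "B1^2 < real n * (4 - M^2)" using n \<open>0 < 4 - M^2\<close> by (simp add: pos_divide_less_eq)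
    moreover have "real n \<le> (real n)^2"
      by (metis le_square of_nat_le_iff of_nat_mult power2_eq_square)
    then have "real n * (4 - M^2) \<le> (real n)^2 * (4 - M^2)"
      using \<open>0 < 4 - M^2\<close> by (intro mult_right_mono) auto
    ultimately show False by linarith
  qed
qed

section \<open>Zeros on the unit circle\<close>

definition circle_zeros :: "nat \<Rightarrow> real set" where
  "circle_zeros n = {t\<in>{-pi<..pi}. F n t = 0}"

lemma circle_zeros_subset: "circle_zeros n \<subseteq> {-pi<..pi}"
  unfolding circle_zeros_def by auto

lemma cis_image_circle_zeros:
  assumes "k < n"
  shows "cis ` circle_zeros n = {z. poly (Ppoly k a n) z = 0 \<and> norm z = 1}"
proof -
  have "{z. poly (Ppoly k a n) z = 0 \<and> norm z = 1} = {z. norm z = 1} \<inter> {z. poly (Ppoly k a n) z = 0}"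
    by auto
  also have "\<dots> = cis ` {t\<in>{-pi<..pi}. poly (Ppoly k a n) (cis t) = 0}"
    unfolding unit_circle_eq_cis_image by auto
  finally show ?thesis using poly_Ppoly_cis[of n] assms by (simp add: circle_zeros_def)
qed

lemma finite_circle_zeros:
  assumes "k < n"
  shows "finite (circle_zeros n)"
proof -
  have "finite (cis ` circle_zeros n)"
    unfolding cis_image_circle_zeros[OF assms] using poly_roots_finite[OF Ppoly_nonzero[OF assms]] by simp
  moreover have "inj_on cis (circle_zeros n)" by (rule inj_on_subset[OF inj_on_cis]) (auto simp: circle_zeros_def)
  ultimately show ?thesis using finite_imageD by blast
qed

lemma zeros_on_Ppoly_eq_sum:
  assumes "k < n"
  shows "zeros_on (Ppoly k a n) = (\<Sum>t\<in>circle_zeros n. order (cis t) (Ppoly k a n))"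
proof -
  have "zeros_on (Ppoly k a n) = (\<Sum>z\<in>cis ` circle_zeros n. order z (Ppoly k a n))"
    unfolding zeros_on_def size_filter_mset_proots[OF Ppoly_nonzero[OF assms]] cis_image_circle_zeros[OF assms] ..
  also have "\<dots> = (\<Sum>t\<in>circle_zeros n. order (cis t) (Ppoly k a n))"
    by (rule sum.reindex_cong[OF inj_on_subset[OF inj_on_cis]]) (auto simp: circle_zeros_def)
  finally show ?thesis .
qed

lemma card_circle_zeros_le_zeros_on:
  assumes "k < n"
  shows "card (circle_zeros n) \<le> zeros_on (Ppoly k a n)"
  unfolding zeros_on_Ppoly_eq_sum[OF assms] card_eq_sum
proof (rule sum_mono)
  fix t assume "t \<in> circle_zeros n"
  then have "poly (Ppoly k a n) (cis t) = 0" using cis_image_circle_zeros[OF assms] by blast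
  then show "1 \<le> order (cis t) (Ppoly k a n)"
    using Ppoly_nonzero[OF assms] by (simp add: Suc_le_eq order_gt_0_iff)
qed

lemma zeros_on_le_card_circle_zeros:
  assumes "k < n" "B1^2 + B2^2 < 4 * (real n)^2"
  shows "zeros_on (Ppoly k a n) \<le> card (circle_zeros n) + card {t\<in>circle_zeros n. F1 n t = 0}"
proof -
  have "zeros_on (Ppoly k a n) \<le> (\<Sum>t\<in>circle_zeros n. 1 + (if F1 n t = 0 then 1 else 0))"
    unfolding zeros_on_Ppoly_eq_sum[OF assms(1)]
  proof (rule sum_mono)
    fix t
    show "order (cis t) (Ppoly k a n) \<le> 1 + (if F1 n t = 0 then 1 else 0)"
      using order_Ppoly_cis_le[OF assms, of t] by (simp split: if_splits)
  qed
  also have "\<dots> = card (circle_zeros n) + card {t\<in>circle_zeros n. F1 n t = 0}"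
    using sum.inter_filter[OF finite_circle_zeros[OF assms(1)], of "\<lambda>_. 1::nat" "\<lambda>t. F1 n t = 0"]
    by (simp add: sum_Suc)
  finally show ?thesis .
qed

lemma card_F1_zeros_in_cell_le:
  assumes "N > 0" "k < n" "B1 \<le> real n" "B2 < (real n)^2"
  shows "finite {t\<in>{cell_lo N i..cell_hi N i}. F1 n t = 0}"
    "real (card {t\<in>{cell_lo N i..cell_hi N i}. F1 n t = 0}) \<le> 2 * real n / real N + 2"
proof -
  have "real n > 0" using assms(2) by simp
  note count = card_zeros_perturbed_sin_le[of "real n" "F1 n" "F2 n" Q1 Q2,
      OF this F1_deriv F1_def F2_def order_trans[OF abs_Q1_le assms(3)]
      le_less_trans[OF abs_Q2_le assms(4)] less_imp_le[OF cell_lo_less_hi[OF assms(1)]]]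
  show "finite {t\<in>{cell_lo N i..cell_hi N i}. F1 n t = 0}" by (rule count(1))
  show "real (card {t\<in>{cell_lo N i..cell_hi N i}. F1 n t = 0}) \<le> 2 * real n / real N + 2"
    using count(2) by (simp add: cell_width mult.commute)
qed

lemma card_circle_zeros_in_cell_le:
  assumes "N > 0" "k < n" "B1 \<le> real n" "B2 < (real n)^2"
  shows "real (card (circle_zeros n \<inter> {cell_lo N i<..cell_hi N i})) \<le> 2 * real n / real N + 3"
proof -
  have "card (circle_zeros n \<inter> {cell_lo N i<..cell_hi N i})
      \<le> card {t\<in>{cell_lo N i..cell_hi N i}. - F1 n t = 0} + 1"
    using card_F1_zeros_in_cell_le(1)[OF assms, of i] finite_circle_zeros[OF assms(2)]
    by (intro card_zeros_le_Suc_card_deriv_zeros[OF F_deriv]) (auto simp: circle_zeros_def)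
  then show ?thesis using card_F1_zeros_in_cell_le(2)[OF assms, of i] by simp
qed

lemma card_circle_zeros_in_cell_ge:
  assumes "N > 0" "i < N" "k < n" and Q_lt_2: "\<And>t. t \<in> {cell_lo N i..cell_hi N i} \<Longrightarrow> \<bar>Q t\<bar> < 2"
  shows "2 * real n / real N - 2 \<le> real (card (circle_zeros n \<inter> {cell_lo N i<..cell_hi N i}))"
proof -
  have "real n > 0" using assms(3) by simp
  obtain Y where Y: "Y \<subseteq> {t\<in>{cell_lo N i<..<cell_hi N i}. F n t = 0}" "finite Y"
    "real n * (cell_hi N i - cell_lo N i) / pi - 2 \<le> real (card Y)"
    by (rule card_zeros_perturbed_cos_ge[OF \<open>real n > 0\<close> F_def continuous_on_Q Q_lt_2])
  have "Y \<subseteq> circle_zeros n \<inter> {cell_lo N i<..cell_hi N i}"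
    using Y(1) cell_subset[OF assms(2)] unfolding circle_zeros_def by fastforce
  then have "real (card Y) \<le> real (card (circle_zeros n \<inter> {cell_lo N i<..cell_hi N i}))"
    using finite_circle_zeros[OF assms(3)] by (simp add: card_mono)
  then show ?thesis using Y(3) by (simp add: cell_width mult.commute)
qed

lemma circle_zeros_in_cell_empty:
  assumes "\<And>t. t \<in> {cell_lo N i..cell_hi N i} \<Longrightarrow> 2 < \<bar>Q t\<bar>"
  shows "circle_zeros n \<inter> {cell_lo N i<..cell_hi N i} = {}"
proof -
  have "F n t \<noteq> 0" if "t \<in> {cell_lo N i..cell_hi N i}" for t
    using assms[OF that] abs_cos_le_one[of "real n * t"] unfolding F_def by linarith
  then show ?thesis unfolding circle_zeros_def by auto
qed

section \<open>The level set \<open>|Q| = 2\<close> and the degenerate case\<close>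

definition Q_level_poly :: "real \<Rightarrow> complex poly" where
  "Q_level_poly c = Ppoly k a k - monom 1 (2*k) - 1 - monom (of_real c) k"

lemma poly_Q_level_poly_cis: "poly (Q_level_poly c) (cis t) = cis t ^ k * of_real (Q t - c)"
proof -
  have "cis t ^ (2*k) + 1 = cis t ^ k * (cis (real k * t) + cis (- (real k * t)))"
    using cis_power_eq[of t "2*k" k] cis_power_eq[of t 0 k] by (simp add: algebra_simps)
  then show ?thesis
    unfolding Q_level_poly_def using poly_Ppoly_cis[of k t]
    by (simp add: poly_monom F_def cis_add_cis_minus algebra_simps)
qed

lemma Q_level_poly_nonzero:
  assumes "j0 \<in> {1..k}" "a j0 \<noteq> 0"
  shows "Q_level_poly c \<noteq> 0"
proof -
  have "(\<Sum>j=1..k. if k - j = k + j0 then (of_int (a j) :: complex) else 0) = 0"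
    using assms by (intro sum.neutral) auto
  then have "coeff (Q_level_poly c) (k + j0) = of_int (a j0)"
    using assms unfolding Q_level_poly_def Ppoly_def by (simp add: coeff_sum sum.distrib coeff_1 sum.delta)
  then show ?thesis using assms by auto
qed

lemma finite_Q_level_set:
  assumes "j0 \<in> {1..k}" "a j0 \<noteq> 0"
  shows "finite {t\<in>{-pi..pi}. Q t = c}"
proof -
  let ?S = "{t\<in>{-pi<..pi}. Q t = c}"
  have "cis ` ?S \<subseteq> {z. poly (Q_level_poly c) z = 0}"
    by (rule image_subsetI) (simp add: poly_Q_level_poly_cis)
  then have "finite (cis ` ?S)"
    by (rule finite_subset) (rule poly_roots_finite[OF Q_level_poly_nonzero[OF assms]])
  moreover have "inj_on cis ?S" by (rule inj_on_subset[OF inj_on_cis]) auto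
  ultimately have "finite (insert (-pi) ?S)" by (simp add: finite_image_iff)
  then show ?thesis by (rule finite_subset[rotated]) auto
qed

text \<open>In the degenerate case \<open>P\<^sub>2\<^sub>n = (x\<^sup>n \<plusminus> 1)\<^sup>2\<close>.\<close>
definition degenerate :: bool where
  "degenerate \<longleftrightarrow> (\<forall>j\<in>{1..k}. a j = 0) \<and> \<bar>a 0\<bar> = 2"

lemma finite_Q_abs_eq_2:
  assumes "\<not> degenerate"
  shows "finite {t\<in>{-pi..pi}. \<bar>Q t\<bar> = 2}"
proof (cases "\<forall>j\<in>{1..k}. a j = 0")
  case True
  then have "\<bar>Q t\<bar> \<noteq> 2" for t using assms unfolding degenerate_def Q_def by simp
  then show ?thesis by simp
next
  case False
  then obtain j0 where j0: "j0 \<in> {1..k}" "a j0 \<noteq> 0" by blast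
  have "{t\<in>{-pi..pi}. \<bar>Q t\<bar> = 2} \<subseteq> {t\<in>{-pi..pi}. Q t = 2} \<union> {t\<in>{-pi..pi}. Q t = -2}" by auto
  then show ?thesis using finite_Q_level_set[OF j0] finite_subset by blast
qed

lemma zeros_on_Ppoly_degenerate:
  assumes "degenerate" "k < n"
  shows "zeros_on (Ppoly k a n) = 2*n"
proof -
  have roots_on_circle: "norm w = 1" if "poly (Ppoly k a n) w = 0" for w
  proof -
    have "(a 0)^2 = \<bar>a 0\<bar>^2" by simp
    also have "\<dots> = 4" using assms(1) unfolding degenerate_def by simp
    finally have a0: "(of_int (a 0) :: complex)^2 = 4" by (metis of_int_numeral of_int_power)
    have "poly (Ppoly k a n) w = (w^n)^2 + of_int (a 0) * w^n + 1"
      using assms(1) unfolding degenerate_def Ppoly_def by (simp add: poly_monom power_mult mult.commute[of 2])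
    also have "\<dots> = (w^n + of_int (a 0) / 2)^2"
      using a0 by (simp add: power2_eq_square field_simps)
    finally have "poly (Ppoly k a n) w = (w^n + of_int (a 0) / 2)^2" .
    then have "w^n = - (of_int (a 0) / 2)" using that by (simp add: add_eq_0_iff)
    then have "norm w ^ n = norm (of_int (a 0) :: complex) / 2"
      by (metis norm_divide norm_minus_cancel norm_numeral norm_power)
    also have "\<dots> = 1 ^ n" using assms(1) unfolding degenerate_def by (simp flip: of_int_abs)
    finally show ?thesis using power_eq_iff_eq_base[of n "norm w" 1] assms(2) by simp
  qed
  have "filter_mset (\<lambda>z. norm z = 1) (proots (Ppoly k a n)) = filter_mset (\<lambda>_. True) (proots (Ppoly k a n))"
    using roots_on_circle Ppoly_nonzero[OF assms(2)] by (intro filter_mset_cong) auto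
  then show ?thesis
    unfolding zeros_on_def using size_proots_complex degree_Ppoly[OF assms(2)] by simp
qed

definition good_cell :: "nat \<Rightarrow> nat \<Rightarrow> bool" where
  "good_cell N i \<longleftrightarrow> (\<forall>t\<in>{cell_lo N i..cell_hi N i}. \<bar>Q t\<bar> < 2)"

definition bad_cell :: "nat \<Rightarrow> nat \<Rightarrow> bool" where
  "bad_cell N i \<longleftrightarrow> (\<forall>t\<in>{cell_lo N i..cell_hi N i}. 2 < \<bar>Q t\<bar>)"

definition good_cells :: "nat \<Rightarrow> nat set" where
  "good_cells N = {i\<in>{..<N}. good_cell N i}"

definition mixed_cells :: "nat \<Rightarrow> nat set" where
  "mixed_cells N = {i\<in>{..<N}. \<not> good_cell N i \<and> \<not> bad_cell N i}"

lemma card_mixed_cells_le: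
  assumes "N > 0" "\<not> degenerate"
  shows "card (mixed_cells N) \<le> 2 * card {t\<in>{-pi..pi}. \<bar>Q t\<bar> = 2}"
proof -
  have "\<exists>t\<in>{t\<in>{-pi..pi}. \<bar>Q t\<bar> = 2}. t \<in> {cell_lo N i..cell_hi N i}" if "i \<in> mixed_cells N" for i
  proof -
    have "\<not> good_cell N i" "\<not> bad_cell N i" using that unfolding mixed_cells_def by auto
    then obtain t1 t2 where t: "t1 \<in> {cell_lo N i..cell_hi N i}" "2 \<le> \<bar>Q t1\<bar>"
      "t2 \<in> {cell_lo N i..cell_hi N i}" "\<bar>Q t2\<bar> \<le> 2"
      unfolding good_cell_def bad_cell_def by (meson not_less)
    have "continuous_on S (\<lambda>t. \<bar>Q t\<bar>)" for S by (intro continuous_intros continuous_on_Q)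
    moreover have "2 \<in> closed_segment \<bar>Q t1\<bar> \<bar>Q t2\<bar>"
      using t by (auto simp: closed_segment_eq_real_ivl)
    ultimately obtain t where "t \<in> closed_segment t1 t2" "\<bar>Q t\<bar> = 2"
      using IVT'_closed_segment_real[where f="\<lambda>t. \<bar>Q t\<bar>" and y=2 and a=t1 and b=t2] by blast
    moreover have "closed_segment t1 t2 \<subseteq> {cell_lo N i..cell_hi N i}"
      using t by (simp add: closed_segment_subset is_interval_convex)
    moreover have "i < N" using that unfolding mixed_cells_def by simp
    ultimately show ?thesis using cell_subset[of i N] by blast
  qed
  then have "mixed_cells N \<subseteq> {i\<in>{..<N}. \<exists>t\<in>{t\<in>{-pi..pi}. \<bar>Q t\<bar> = 2}. t \<in> {cell_lo N i..cell_hi N i}}"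
    unfolding mixed_cells_def by blast
  then have "card (mixed_cells N)
      \<le> card {i\<in>{..<N}. \<exists>t\<in>{t\<in>{-pi..pi}. \<bar>Q t\<bar> = 2}. t \<in> {cell_lo N i..cell_hi N i}}"
    by (intro card_mono) simp_all
  then show ?thesis
    using card_cells_meeting_le[OF assms(1) finite_Q_abs_eq_2[OF assms(2)]] by linarith
qed

text \<open>The bounds make \<open>F1 n\<close> a perturbation of \<open>2n sin(nt)\<close> as in \<open>card_zeros_perturbed_sin_le\<close>, and rule
  out zeros of multiplicity three.\<close>
definition large_degree :: "nat \<Rightarrow> bool" where
  "large_degree n \<longleftrightarrow> k < n \<and> B1 \<le> real n \<and> B2 < (real n)^2 \<and> B1^2 + B2^2 < 4 * (real n)^2"

lemma eventually_large_degree: "eventually large_degree sequentially"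
  using eventually_gt_real_sequentially[of "max (real k) (max B1 (max (B2 + 1) (B1^2 + B2^2 + 1)))"]
proof (rule eventually_mono)
  fix n assume n: "max (real k) (max B1 (max (B2 + 1) (B1^2 + B2^2 + 1))) < real n"
  have "real n \<le> (real n)^2" by (metis le_square of_nat_le_iff of_nat_mult power2_eq_square)
  moreover have "k < n" "B1 \<le> real n" "B2 + 1 < real n" "B1^2 + B2^2 + 1 < real n" using n by auto
  ultimately show "large_degree n" unfolding large_degree_def by (intro conjI) linarith+
qed

lemma zeros_on_ge_good_cells:
  assumes "N > 0" "k < n"
  shows "real (card (good_cells N)) * (2 * real n / real N - 2) \<le> real (zeros_on (Ppoly k a n))"
proof -
  let ?X = "2 * real n / real N - 2"
  have "real (card (good_cells N)) * ?X = (\<Sum>i<N. if good_cell N i then ?X else 0)"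
    unfolding good_cells_def by (simp add: sum.inter_filter[symmetric])
  also have "\<dots> \<le> (\<Sum>i<N. real (card (circle_zeros n \<inter> {cell_lo N i<..cell_hi N i})))"
    using card_circle_zeros_in_cell_ge[OF assms(1) _ assms(2)] by (intro sum_mono) (auto simp: good_cell_def)
  also have "\<dots> = real (card (circle_zeros n))"
    unfolding card_eq_sum_card_cells[OF assms(1) finite_circle_zeros[OF assms(2)] circle_zeros_subset] by simp
  also have "\<dots> \<le> real (zeros_on (Ppoly k a n))"
    using card_circle_zeros_le_zeros_on[OF assms(2)] by simp
  finally show ?thesis .
qed

lemma card_zeros_in_cell_le:
  assumes "N > 0" "i < N" "large_degree n"
    and no_common: "good_cell N i \<Longrightarrow> \<forall>t\<in>{cell_lo N i..cell_hi N i}. \<not> (F n t = 0 \<and> F1 n t = 0)"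
  defines "C \<equiv> {cell_lo N i<..cell_hi N i}"
  shows "real (card (circle_zeros n \<inter> C)) + real (card ({t\<in>circle_zeros n. F1 n t = 0} \<inter> C))
    \<le> (if good_cell N i then 2 * real n / real N + 3 else 0)
      + (if i \<in> mixed_cells N then 2 * (2 * real n / real N + 3) else 0)"
proof -
  have large: "N > 0" "k < n" "B1 \<le> real n" "B2 < (real n)^2"
    using assms(1,3) unfolding large_degree_def by auto
  have Z: "real (card (circle_zeros n \<inter> C)) \<le> 2 * real n / real N + 3"
    unfolding C_def by (rule card_circle_zeros_in_cell_le[OF large])
  have "{t\<in>circle_zeros n. F1 n t = 0} \<inter> C \<subseteq> {t\<in>{cell_lo N i..cell_hi N i}. F1 n t = 0}"
    unfolding C_def by auto
  then have "card ({t\<in>circle_zeros n. F1 n t = 0} \<inter> C) \<le> card {t\<in>{cell_lo N i..cell_hi N i}. F1 n t = 0}"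
    using card_F1_zeros_in_cell_le(1)[OF large] by (rule card_mono[rotated])
  then have Z1: "real (card ({t\<in>circle_zeros n. F1 n t = 0} \<inter> C)) \<le> 2 * real n / real N + 2"
    using card_F1_zeros_in_cell_le(2)[OF large, of i] by linarith
  consider "good_cell N i" | "bad_cell N i" "\<not> good_cell N i" | "i \<in> mixed_cells N"
    using assms(2) unfolding mixed_cells_def by blast
  then show ?thesis
  proof cases
    case 1
    then have "{t\<in>circle_zeros n. F1 n t = 0} \<inter> C = {}"
      using no_common unfolding C_def circle_zeros_def by auto
    then show ?thesis using Z 1 unfolding mixed_cells_def by simp
  next
    case 2
    then have "circle_zeros n \<inter> C = {}"
      unfolding C_def bad_cell_def by (intro circle_zeros_in_cell_empty) auto
    moreover from this have "{t\<in>circle_zeros n. F1 n t = 0} \<inter> C = {}" by blast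
    ultimately show ?thesis using 2 unfolding mixed_cells_def by simp
  next
    case 3
    then show ?thesis using Z Z1 unfolding mixed_cells_def by simp
  qed
qed

lemma zeros_on_le_good_mixed_cells:
  assumes "N > 0" "large_degree n"
    and no_common: "\<forall>i\<in>good_cells N. \<forall>t\<in>{cell_lo N i..cell_hi N i}. \<not> (F n t = 0 \<and> F1 n t = 0)"
  shows "real (zeros_on (Ppoly k a n))
    \<le> (real (card (good_cells N)) + 2 * real (card (mixed_cells N))) * (2 * real n / real N + 3)"
proof -
  let ?X = "2 * real n / real N + 3" and ?Z1 = "{t\<in>circle_zeros n. F1 n t = 0}"
  have kn: "k < n" and big: "B1^2 + B2^2 < 4 * (real n)^2"
    using assms(2) unfolding large_degree_def by auto
  have "real (zeros_on (Ppoly k a n)) \<le> real (card (circle_zeros n)) + real (card ?Z1)"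
    using zeros_on_le_card_circle_zeros[OF kn big] by linarith
  also have "\<dots> = (\<Sum>i<N. real (card (circle_zeros n \<inter> {cell_lo N i<..cell_hi N i}))
      + real (card (?Z1 \<inter> {cell_lo N i<..cell_hi N i})))"
    using finite_circle_zeros[OF kn] circle_zeros_subset[of n]
    by (simp add: card_eq_sum_card_cells[OF assms(1)] sum.distrib subset_iff)
  also have "\<dots> \<le> (\<Sum>i<N. (if good_cell N i then ?X else 0) + (if i \<in> mixed_cells N then 2 * ?X else 0))"
    using card_zeros_in_cell_le[OF assms(1) _ assms(2)] no_common
    by (intro sum_mono) (simp add: good_cells_def)
  also have "\<dots> = (real (card (good_cells N)) + 2 * real (card (mixed_cells N))) * ?X"
    unfolding good_cells_def mixed_cells_def
    by (simp add: sum.distrib sum.inter_filter[symmetric] algebra_simps)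
  finally show ?thesis .
qed

lemma eventually_no_common_zero_in_good_cells:
  assumes "N > 0"
  shows "eventually (\<lambda>n. \<forall>i\<in>good_cells N. \<forall>t\<in>{cell_lo N i..cell_hi N i}. \<not> (F n t = 0 \<and> F1 n t = 0))
    sequentially"
  using eventually_no_common_zero_F_F1 cell_lo_less_hi[OF assms]
  by (intro eventually_ball_finite) (auto simp: good_cells_def good_cell_def less_imp_le)

lemma zeros_on_ratio_bounds:
  assumes N: "N > 0" and n: "large_degree n"
    and no_common: "\<forall>i\<in>good_cells N. \<forall>t\<in>{cell_lo N i..cell_hi N i}. \<not> (F n t = 0 \<and> F1 n t = 0)"
  defines "G \<equiv> real (card (good_cells N))" and "M \<equiv> real (card (mixed_cells N))"
  shows "G / real N - G / real n \<le> real (zeros_on (Ppoly k a n)) / (2 * real n)"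
    and "real (zeros_on (Ppoly k a n)) / (2 * real n) \<le> G / real N + 2 * M / real N + 3 * (G + 2 * M) / (2 * real n)"
proof -
  have "0 < real n" using n by (simp add: large_degree_def)
  have "G / real N - G / real n = G * (2 * real n / real N - 2) / (2 * real n)"
    using \<open>0 < real n\<close> N by (simp add: field_simps)
  also have "\<dots> \<le> real (zeros_on (Ppoly k a n)) / (2 * real n)"
    unfolding G_def using zeros_on_ge_good_cells[OF N] n \<open>0 < real n\<close>
    by (intro divide_right_mono) (simp_all add: large_degree_def)
  finally show "G / real N - G / real n \<le> real (zeros_on (Ppoly k a n)) / (2 * real n)" .
  have "real (zeros_on (Ppoly k a n)) / (2 * real n) \<le> (G + 2 * M) * (2 * real n / real N + 3) / (2 * real n)"
    unfolding G_def M_def using zeros_on_le_good_mixed_cells[OF N n no_common] \<open>0 < real n\<close>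
    by (intro divide_right_mono) simp_all
  also have "\<dots> = G / real N + 2 * M / real N + 3 * (G + 2 * M) / (2 * real n)"
    using \<open>0 < real n\<close> N by (simp add: field_simps)
  finally show "real (zeros_on (Ppoly k a n)) / (2 * real n)
      \<le> G / real N + 2 * M / real N + 3 * (G + 2 * M) / (2 * real n)" .
qed

text \<open>Choosing \<open>N \<ge> 8(Z+1)/\<epsilon>\<close>, with \<open>Z\<close> the number of solutions of \<open>|Q| = 2\<close>, makes the mixed cells
  contribute at most \<open>\<epsilon>/2\<close>.\<close>
lemma convergent_zeros_on_ratio_nondegenerate:
  assumes "\<not> degenerate"
  shows "convergent (\<lambda>n. real (zeros_on (Ppoly k a n)) / (2 * real n))"
proof (rule convergent_if_eventually_near)
  fix e :: real assume e: "e > 0"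
  define Z where "Z = real (card {t\<in>{-pi..pi}. \<bar>Q t\<bar> = 2})"
  define N where "N = nat \<lceil>8 * (Z + 1) / e\<rceil>"
  define G where "G = real (card (good_cells N))"
  define M where "M = real (card (mixed_cells N))"
  have "0 < 8 * (Z + 1) / e" using e by (simp add: Z_def)
  then have N: "N > 0" "8 * (Z + 1) / e \<le> real N" unfolding N_def by linarith+
  have "M \<le> 2 * Z" unfolding M_def Z_def using card_mixed_cells_le[OF N(1) assms] by linarith
  then have "4 * M \<le> e * real N" using N(2) e by (simp add: field_simps)
  then have MN: "2 * M / real N \<le> e/2" using N(1) by (simp add: field_simps)
  have "eventually (\<lambda>n. \<bar>real (zeros_on (Ppoly k a n)) / (2 * real n) - G / real N\<bar> \<le> e) sequentially"
    using eventually_large_degree eventually_no_common_zero_in_good_cells[OF N(1)]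
      eventually_gt_real_sequentially[of "3 * (G + 2 * M) / e"]
  proof eventually_elim
    case (elim n)
    have "0 \<le> G" "0 \<le> M" by (simp_all add: G_def M_def)
    moreover have "0 < real n" using elim(1) by (simp add: large_degree_def)
    ultimately have "G / real n \<le> e" "3 * (G + 2 * M) / (2 * real n) \<le> e / 2"
      using elim(3) e by (simp_all add: field_simps)
    then show ?case using zeros_on_ratio_bounds[OF N(1) elim(1,2)] MN
      unfolding G_def M_def abs_le_iff by (intro conjI) linarith+
  qed
  then show "\<exists>c. eventually (\<lambda>n. \<bar>real (zeros_on (Ppoly k a n)) / (2 * real n) - c\<bar> \<le> e) sequentially"
    by blast
qed

lemma convergent_zeros_on_ratio: "convergent (\<lambda>n. real (zeros_on (Ppoly k a n)) / (2 * real n))"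
proof (cases degenerate)
  case True
  have "eventually (\<lambda>n. real (zeros_on (Ppoly k a n)) / (2 * real n) = 1) sequentially"
    using eventually_gt_at_top[of k] by eventually_elim (simp add: zeros_on_Ppoly_degenerate[OF True])
  then have "(\<lambda>n. real (zeros_on (Ppoly k a n)) / (2 * real n)) \<longlonglongrightarrow> 1" by (rule tendsto_eventually)
  then show ?thesis unfolding convergent_def ..
qed (rule convergent_zeros_on_ratio_nondegenerate)

lemma C_prop_Ppoly:
  assumes "k < n"
  shows "C_prop (Ppoly k a n) n = 1 - real (zeros_on (Ppoly k a n)) / (2 * real n)"
proof -
  have "zeros_in (Ppoly k a n) + zeros_out (Ppoly k a n) = 2 * n - zeros_on (Ppoly k a n)"
    using zeros_in_on_out_sum[of "Ppoly k a n"] degree_Ppoly[OF assms] by simp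
  moreover have "zeros_on (Ppoly k a n) \<le> 2 * n"
    using zeros_in_on_out_sum[of "Ppoly k a n"] degree_Ppoly[OF assms] by simp
  ultimately show ?thesis using assms unfolding C_prop_def by (simp add: of_nat_diff diff_divide_distrib)
qed

end

theorem theorem1:
  fixes k :: nat and a :: "nat \<Rightarrow> int"
  assumes "k > 0"
  shows "\<exists>L. ((\<lambda>n. C_prop (Ppoly k a n) n) \<longlongrightarrow> L) sequentially"
proof -
  interpret reciprocal_family k a .
  obtain L where "(\<lambda>n. real (zeros_on (Ppoly k a n)) / (2 * real n)) \<longlonglongrightarrow> L"
    using convergent_zeros_on_ratio unfolding convergent_def by blast
  then have "(\<lambda>n. 1 - real (zeros_on (Ppoly k a n)) / (2 * real n)) \<longlonglongrightarrow> 1 - L"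
    by (intro tendsto_intros)
  moreover have "eventually (\<lambda>n. 1 - real (zeros_on (Ppoly k a n)) / (2 * real n) = C_prop (Ppoly k a n) n)
      sequentially"
    using eventually_gt_at_top[of k] by eventually_elim (simp add: C_prop_Ppoly)
  ultimately show ?thesis by (intro exI) (rule Lim_transform_eventually)
qed

end
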